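(* Let $m\ge6$ be even, $t=m/2$, and $s$ an integer with $2\le s\le 2^{t-1}$. Let $E_1,\dots,E_\alpha$ be a partial spread in $\mathbb{F}_2^m$ and $A,B\subseteq\{1,\dots,\alpha\}$ with $|A|=|B|=s$ and $|A\cap B|=1$. Let $f=\sum_{i\in A}f_i$, $g=\sum_{i\in B}f_i$, and $F=\{f,g,f+g\}$. Then for all nonzero $\mathbf{h},\mathbf{l}\in\mathbb{F}_2^m$ with $\mathbf{h}\neq\mathbf{l}$ and all $f_1,f_2\in F$ with $f_1\neq f_2$, \[\widehat{f_1}(\mathbf{h}+\mathbf{l})+\widehat{f_2}(\mathbf{h})-\widehat{f_1+f_2}(\mathbf{l})\neq 2^m\quad\text{and}\quad \widehat{f_1}(\mathbf{h}+\mathbf{l})+\widehat{f_2}(\mathbf{l})-\widehat{f_1+f_2}(\mathbf{h})\neq 2^m.\]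
   Context: A partial spread in $\mathbb{F}_2^m$ ($m=2t$) is a set of subspaces $E_1,\dots,E_\alpha$ of $\mathbb{F}_2^m$, each of dimension $t$, with $E_i\cap E_j=\{\mathbf{0}\}$ for $i\ne j$. $f_i:\mathbb{F}_2^m\to\mathbb{F}_2$ is the indicator function of $E_i\setminus\{\mathbf{0}\}$; sums of Boolean functions are mod 2. For a Boolean function $h$, $\widehat{h}(\mathbf{w})=\sum_{\mathbf{x}\in\mathbb{F}_2^m}(-1)^{h(\mathbf{x})+\mathbf{w}\cdot\mathbf{x}}$ with the standard inner product. *)

theory Defs
  imports "HOL-Analysis.Analysis" "HOL-Library.Z2"
begin

definition dotp :: "bit ^ 'm \<Rightarrow> bit ^ 'm \<Rightarrow> bit" where
  "dotp w x = (\<Sum>i\<in>UNIV. w $ i * x $ i)"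

definition walsh :: "(bit ^ 'm \<Rightarrow> bit) \<Rightarrow> bit ^ 'm \<Rightarrow> int" where
  "walsh h w = (\<Sum>x\<in>UNIV. (-1::int) ^ (if h x + dotp w x = 0 then 0 else 1))"

definition partial_spread :: "nat \<Rightarrow> nat \<Rightarrow> (nat \<Rightarrow> (bit ^ 'm) set) \<Rightarrow> bool" where
  "partial_spread t \<alpha> E \<longleftrightarrow>
     (\<forall>i\<in>{1..\<alpha>}. vec.subspace (E i) \<and> vec.dim (E i) = t) \<and>
     (\<forall>i\<in>{1..\<alpha>}. \<forall>j\<in>{1..\<alpha>}. i \<noteq> j \<longrightarrow> E i \<inter> E j = {0})"

definition spread_fun :: "(bit ^ 'm) set \<Rightarrow> bit ^ 'm \<Rightarrow> bit" where
  "spread_fun S x = (if x \<in> S \<and> x \<noteq> 0 then 1 else 0)"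

end

theory Submission
  imports Defs
begin

text \<open>For w \<noteq> 0 the Walsh value of f_I = \<Sum>i\<in>I. f_i equals 2|I| minus 2^(t+1) times the number
  of spread elements E_i (i \<in> I) annihilated by w. Two spread elements span the whole space, so
  at most one of them is annihilated and the value lies between 2|I| - 2^(t+1) and 2|I|.
  The three functions of F are f_A, f_B and f_(A \<triangle> B), and the sum of any two of them is the
  third. For distinct I, J among A, B, A \<triangle> B the combination in question is therefore at most
  2|I| + 2|J| - 2|I \<triangle> J| + 2^(t+1) = 4|I \<inter> J| + 2^(t+1) < 2^(t+2) \<le> 2^m,
  because |I \<inter> J| \<le> s - 1 < 2^(t-1).\<close>

lemma UNIV_bit: "(UNIV :: bit set) = {0, 1}"
  by (auto intro: bit.exhaust)

instance bit :: finite
  by standard (simp only: UNIV_bit finite.emptyI finite.insertI)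

lemma card_bit [simp]: "CARD(bit) = 2"
  unfolding UNIV_bit by simp

text \<open>The simp rule add_bit_eq_xor of HOL-Library.Z2 turns + on bit into xor; it is disabled
  wherever additive reasoning on bit is needed.\<close>

lemma bit_add_eq_0_iff: "(a :: bit) + b = 0 \<longleftrightarrow> a = b"
  by (cases a; cases b) simp_all

lemma vec_bit_add_self [simp]: "(x :: bit ^ 'n) + x = 0"
  by (simp add: vec_eq_iff)

lemma vec_bit_add_eq_0_iff: "(x :: bit ^ 'n) + y = 0 \<longleftrightarrow> x = y"
  by (simp add: vec_eq_iff bit_add_eq_0_iff del: add_bit_eq_xor)

lemma (in finite_dimensional_vector_space) card_subspace:
  assumes "finite (UNIV :: 'a set)" and "subspace S"
  shows "card S = CARD('a) ^ dim S"
proof -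
  obtain B where B: "B \<subseteq> S" "independent B" "S \<subseteq> span B" "card B = dim S"
    using basis_exists by blast
  have fin: "finite B"
    using B(2) by (rule finiteI_independent)
  let ?comb = "\<lambda>u. \<Sum>v\<in>B. u v *s v"
  have "S = span B"
    using span_subspace[OF B(1,3) assms(2)] by simp
  also have "\<dots> = ?comb ` (\<Pi>\<^sub>E v\<in>B. UNIV)"
  proof -
    have "?comb u \<in> ?comb ` (\<Pi>\<^sub>E v\<in>B. UNIV)" for u
    proof -
      have "?comb u = ?comb (restrict u B)"
        by (rule sum.cong) simp_all
      moreover have "restrict u B \<in> (\<Pi>\<^sub>E v\<in>B. UNIV)"
        by simp
      ultimately show ?thesis
        by (rule image_eqI)
    qed
    then show ?thesis
      unfolding span_finite[OF fin] by auto
  qed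
  finally have S: "S = ?comb ` (\<Pi>\<^sub>E v\<in>B. UNIV)" .
  have "inj_on ?comb (\<Pi>\<^sub>E v\<in>B. UNIV)"
  proof (rule inj_onI)
    fix u u' assume u: "u \<in> (\<Pi>\<^sub>E v\<in>B. UNIV)" "u' \<in> (\<Pi>\<^sub>E v\<in>B. UNIV)" and "?comb u = ?comb u'"
    then have "(\<Sum>v\<in>B. (u v - u' v) *s v) = 0"
      by (simp add: scale_left_diff_distrib sum_subtractf)
    then have "\<forall>v\<in>B. u v = u' v"
      using B(2) unfolding independent_explicit by auto
    then show "u = u'"
      using u unfolding PiE_def by (intro extensionalityI[of u B u']) auto
  qed
  then have "card S = card (\<Pi>\<^sub>E v\<in>B. (UNIV :: 'a set))"
    unfolding S by (rule card_image)
  also have "\<dots> = CARD('a) ^ dim S"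
    by (simp add: card_PiE fin B(4))
  finally show ?thesis .
qed

lemma card_vec_subspace_bit:
  "vec.subspace (S :: (bit ^ 'n) set) \<Longrightarrow> card S = 2 ^ vec.dim S"
  using vec.card_subspace[of S] by simp

lemma dotp_add: "dotp w (x + y) = dotp w x + dotp w y"
  unfolding dotp_def by (simp add: distrib_left sum.distrib del: add_bit_eq_xor mult_bit_eq_and)

lemma dotp_axis: "dotp w (axis i 1) = w $ i"
  unfolding dotp_def axis_def by (simp add: if_distrib cong: if_cong)

lemma all_dotp_eq_0_iff: "(\<forall>x. dotp w x = 0) \<longleftrightarrow> w = 0"
proof
  assume "\<forall>x. dotp w x = 0"
  then show "w = 0"
    using dotp_axis[of w] by (simp add: vec_eq_iff)
qed (simp add: dotp_def)

definition chi :: "bit \<Rightarrow> int" where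
  "chi b = (if b = 0 then 1 else -1)"

lemma chi_add: "chi (a + b) = chi a * chi b"
  by (cases a; cases b) (simp_all add: chi_def)

lemma sum_chi_dotp_subspace:
  assumes "vec.subspace E"
  shows "(\<Sum>x\<in>E. chi (dotp w x)) = (if \<forall>x\<in>E. dotp w x = 0 then int (card E) else 0)"
proof (cases "\<forall>x\<in>E. dotp w x = 0")
  case True
  then show ?thesis
    by (simp add: chi_def)
next
  case False
  then obtain y where y: "y \<in> E" "dotp w y = 1"
    by auto
  \<comment> \<open>Translation by y permutes E and flips the sign of every term.\<close>
  have "(\<Sum>x\<in>E. chi (dotp w x)) = (\<Sum>x\<in>E. chi (dotp w (x + y)))"
    using y assms
    by (intro sum.reindex_bij_witness[of _ "\<lambda>x. x + y" "\<lambda>x. x + y"])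
       (auto simp: add.assoc vec.subspace_add)
  also have "\<dots> = - (\<Sum>x\<in>E. chi (dotp w x))"
    by (simp add: dotp_add chi_add y sum_negf chi_def[of 1] del: add_bit_eq_xor)
  finally have "(\<Sum>x\<in>E. chi (dotp w x)) = 0"
    by simp
  then show ?thesis
    by (subst if_not_P[OF False])
qed

lemma walsh_eq_sum_support:
  assumes "w \<noteq> 0"
  shows "walsh h w = -2 * (\<Sum>x | h x = 1. chi (dotp w x))"
proof -
  have "walsh h w = (\<Sum>x\<in>UNIV. chi (dotp w x) - 2 * (if h x = 1 then chi (dotp w x) else 0))"
    unfolding walsh_def by (rule sum.cong) (auto simp: chi_def)
  also have "\<dots> = (\<Sum>x\<in>UNIV. chi (dotp w x)) - 2 * (\<Sum>x | h x = 1. chi (dotp w x))"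
    using sum.inter_filter[of UNIV "\<lambda>x. chi (dotp w x)" "\<lambda>x. h x = 1"]
    by (simp add: sum_subtractf sum_distrib_left[symmetric])
  also have "(\<Sum>x\<in>UNIV. chi (dotp w x)) = 0"
    using sum_chi_dotp_subspace[OF vec.subspace_UNIV, of w] assms
    by (simp add: all_dotp_eq_0_iff)
  finally show ?thesis
    by simp
qed

lemma vec_subspace_sums_complementary:
  fixes S T :: "('a::field ^ 'n) set"
  assumes "vec.subspace S" and "vec.subspace T" and "S \<inter> T = {0}"
    and "vec.dim S + vec.dim T = CARD('n)"
  shows "{x + y |x y. x \<in> S \<and> y \<in> T} = UNIV"
proof -
  let ?U = "{x + y |x y. x \<in> S \<and> y \<in> T}"
  have "vec.dim ?U = vec.dim (UNIV :: ('a ^ 'n) set)"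
    using vec.dim_sums_Int[OF assms(1,2)] assms(3,4) by (simp add: card_cart_basis)
  then show ?thesis
    using vec.subspace_sums[OF assms(1,2)] by (intro vec.subspace_dim_equal) auto
qed

lemma dotp_vanishing_on_complements_imp_zero:
  fixes S T :: "(bit ^ 'n) set"
  assumes "vec.subspace S" and "vec.subspace T" and "S \<inter> T = {0}"
    and "vec.dim S + vec.dim T = CARD('n)"
    and "\<forall>x\<in>S. dotp w x = 0" and "\<forall>y\<in>T. dotp w y = 0"
  shows "w = 0"
proof -
  have "dotp w z = 0" for z
  proof -
    have "z \<in> {x + y |x y. x \<in> S \<and> y \<in> T}"
      using vec_subspace_sums_complementary[OF assms(1-4)] by blast
    then show ?thesis
      using assms(5,6) by (auto simp: dotp_add simp del: add_bit_eq_xor)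
  qed
  then show ?thesis
    using all_dotp_eq_0_iff by blast
qed

definition spread_sum :: "('i \<Rightarrow> (bit ^ 'm) set) \<Rightarrow> 'i set \<Rightarrow> bit ^ 'm \<Rightarrow> bit" where
  "spread_sum E I x = (\<Sum>i\<in>I. spread_fun (E i) x)"

lemma support_spread_sum:
  assumes "finite I" and "pairwise (\<lambda>i j. E i \<inter> E j \<subseteq> {0}) I"
  shows "{x. spread_sum E I x = 1} = (\<Union>i\<in>I. E i - {0})"
proof (intro set_eqI iffI)
  fix x
  assume "x \<in> (\<Union>i\<in>I. E i - {0})"
  then obtain i where i: "i \<in> I" "x \<in> E i" "x \<noteq> 0"
    by auto
  have "spread_fun (E j) x = 0" if "j \<in> I - {i}" for j
    using that i assms(2) by (auto simp: spread_fun_def pairwise_def)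
  then have "spread_sum E I x = spread_fun (E i) x"
    unfolding spread_sum_def using assms(1) i(1)
    by (simp add: sum.remove sum.neutral del: add_bit_eq_xor)
  then show "x \<in> {x. spread_sum E I x = 1}"
    using i by (simp add: spread_fun_def)
next
  fix x
  assume "x \<in> {x. spread_sum E I x = 1}"
  then have "(\<Sum>i\<in>I. spread_fun (E i) x) \<noteq> 0"
    by (simp add: spread_sum_def)
  then obtain i where "i \<in> I" "spread_fun (E i) x \<noteq> 0"
    by (rule sum.not_neutral_contains_not_neutral)
  then show "x \<in> (\<Union>i\<in>I. E i - {0})"
    by (auto simp: spread_fun_def split: if_splits)
qed

lemma walsh_spread_sum:
  assumes "finite I" and "\<forall>i\<in>I. vec.subspace (E i)"
    and "pairwise (\<lambda>i j. E i \<inter> E j \<subseteq> {0}) I" and "w \<noteq> 0"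
  shows "walsh (spread_sum E I) w =
    2 * int (card I) - 2 * (\<Sum>i\<in>I. if \<forall>x\<in>E i. dotp w x = 0 then int (card (E i)) else 0)"
proof -
  have "walsh (spread_sum E I) w = -2 * (\<Sum>x\<in>(\<Union>i\<in>I. E i - {0}). chi (dotp w x))"
    using walsh_eq_sum_support[OF assms(4)] support_spread_sum[OF assms(1,3)] by simp
  also have "(\<Sum>x\<in>(\<Union>i\<in>I. E i - {0}). chi (dotp w x)) = (\<Sum>i\<in>I. \<Sum>x\<in>E i - {0}. chi (dotp w x))"
    using assms(1,3) by (intro sum.UNION_disjoint) (auto simp: pairwise_def)
  also have "\<dots> = (\<Sum>i\<in>I. (if \<forall>x\<in>E i. dotp w x = 0 then int (card (E i)) else 0) - 1)"
  proof (rule sum.cong[OF refl])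
    fix i
    assume "i \<in> I"
    then have "vec.subspace (E i)"
      using assms(2) by blast
    then show "(\<Sum>x\<in>E i - {0}. chi (dotp w x)) =
        (if \<forall>x\<in>E i. dotp w x = 0 then int (card (E i)) else 0) - 1"
      using sum_chi_dotp_subspace[of "E i" w] vec.subspace_0[of "E i"]
      by (simp add: sum.remove chi_def dotp_def)
  qed
  finally show ?thesis
    by (simp add: sum_subtractf)
qed

lemma partial_spreadD:
  assumes "partial_spread t \<alpha> E" and "i \<in> {1..\<alpha>}"
  shows "vec.subspace (E i)" and "vec.dim (E i) = t" and "card (E i) = 2 ^ t"
  using assms card_vec_subspace_bit[of "E i"] by (auto simp: partial_spread_def)

lemma partial_spread_pairwise:
  "partial_spread t \<alpha> E \<Longrightarrow> pairwise (\<lambda>i j. E i \<inter> E j = {0}) {1..\<alpha>}"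
  by (auto simp: partial_spread_def pairwise_def)

lemma walsh_spread_sum_bounds:
  fixes E :: "nat \<Rightarrow> (bit ^ 'm) set"
  assumes ps: "partial_spread t \<alpha> E" and m: "CARD('m) = 2 * t"
    and I: "I \<subseteq> {1..\<alpha>}" and w: "w \<noteq> 0"
  shows "2 * int (card I) - 2 ^ (t + 1) \<le> walsh (spread_sum E I) w"
    and "walsh (spread_sum E I) w \<le> 2 * int (card I)"
proof -
  have fin: "finite I"
    using I finite_subset by blast
  define J where "J = {i \<in> I. \<forall>x\<in>E i. dotp w x = 0}"
  \<comment> \<open>Two spread elements span everything, so w annihilates at most one of them.\<close>
  have "card J \<le> 1"
  proof -
    have "i = j" if "i \<in> J" "j \<in> J" for i j
    proof (rule ccontr)
      assume "i \<noteq> j"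
      have ij: "i \<in> {1..\<alpha>}" "j \<in> {1..\<alpha>}"
        using that I by (auto simp: J_def)
      have "w = 0"
        using \<open>i \<noteq> j\<close> that partial_spread_pairwise[OF ps] m ij
          partial_spreadD(1,2)[OF ps ij(1)] partial_spreadD(1,2)[OF ps ij(2)]
        by (intro dotp_vanishing_on_complements_imp_zero[of "E i" "E j"])
           (auto simp: J_def pairwise_def)
      with w show False ..
    qed
    then show ?thesis
      using fin by (simp add: J_def card_le_Suc0_iff_eq)
  qed
  have "(\<Sum>i\<in>I. if \<forall>x\<in>E i. dotp w x = 0 then int (card (E i)) else 0) = 2 ^ t * int (card J)"
  proof -
    have "(\<Sum>i\<in>I. if \<forall>x\<in>E i. dotp w x = 0 then int (card (E i)) else 0) = (\<Sum>i\<in>J. int (card (E i)))"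
      unfolding J_def using fin by (simp add: sum.inter_filter)
    also have "\<dots> = (\<Sum>i\<in>J. 2 ^ t)"
      using I by (intro sum.cong) (auto simp: J_def partial_spreadD(3)[OF ps])
    finally show ?thesis
      by simp
  qed
  moreover have "walsh (spread_sum E I) w =
      2 * int (card I) - 2 * (\<Sum>i\<in>I. if \<forall>x\<in>E i. dotp w x = 0 then int (card (E i)) else 0)"
  proof (rule walsh_spread_sum[OF fin _ _ w])
    show "\<forall>i\<in>I. vec.subspace (E i)"
      using I partial_spreadD(1)[OF ps] by blast
    show "pairwise (\<lambda>i j. E i \<inter> E j \<subseteq> {0}) I"
      using pairwise_subset[OF partial_spread_pairwise[OF ps] I] unfolding pairwise_def by blast
  qed
  ultimately show "2 * int (card I) - 2 ^ (t + 1) \<le> walsh (spread_sum E I) w"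
    and "walsh (spread_sum E I) w \<le> 2 * int (card I)"
    using \<open>card J \<le> 1\<close> by auto
qed

lemma sum_bit_add_sum_eq_sum_symdiff:
  fixes g :: "'a \<Rightarrow> bit"
  assumes "finite A" and "finite B"
  shows "sum g A + sum g B = sum g ((A - B) \<union> (B - A))"
proof -
  have "sum g A + sum g B = (sum g (A \<inter> B) + sum g (A \<inter> B)) + (sum g (A - B) + sum g (B - A))"
    using sum.Int_Diff[OF assms(1), of g B] sum.Int_Diff[OF assms(2), of g A]
    by (simp only: Int_commute[of B A] ac_simps)
  also have "\<dots> = sum g ((A - B) \<union> (B - A))"
    using assms by (simp add: sum.union_disjoint Diff_Int_distrib2 del: add_bit_eq_xor)
  finally show ?thesis .
qed

lemma spread_sum_add:
  "finite I \<Longrightarrow> finite J \<Longrightarrow>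
    (\<lambda>x. spread_sum E I x + spread_sum E J x) = spread_sum E ((I - J) \<union> (J - I))"
  unfolding spread_sum_def by (simp add: sum_bit_add_sum_eq_sum_symdiff del: add_bit_eq_xor)

lemma walsh_spread_sum_combination_less:
  fixes E :: "nat \<Rightarrow> (bit ^ 'm) set"
  assumes ps: "partial_spread t \<alpha> E" and m: "CARD('m) = 2 * t" and t: "2 \<le> t"
    and I: "I \<subseteq> {1..\<alpha>}" and J: "J \<subseteq> {1..\<alpha>}" and small: "2 * card (I \<inter> J) < 2 ^ t"
    and "u \<noteq> 0" and "v \<noteq> 0" and "w \<noteq> 0"
  shows "walsh (spread_sum E I) u + walsh (spread_sum E J) v
      - walsh (\<lambda>x. spread_sum E I x + spread_sum E J x) w < 2 ^ CARD('m)"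
proof -
  define K where "K = (I - J) \<union> (J - I)"
  have fin: "finite I" "finite J"
    using I J finite_subset by blast+
  have K: "K \<subseteq> {1..\<alpha>}"
    using I J by (auto simp: K_def)
  have card_K: "card K + 2 * card (I \<inter> J) = card I + card J"
    using fin card_Int_Diff[of I J] card_Int_Diff[of J I]
    by (simp add: K_def card_Un_disjoint Int_commute Diff_Int_distrib2)
  define X :: int where "X = 2 ^ t"
  have "4 \<le> X"
    using power_increasing[OF t, of "2 :: int"] by (simp add: X_def)
  moreover have "(2 :: int) ^ CARD('m) = X * X"
    unfolding X_def m by (simp add: mult_2 power_add)
  ultimately have "4 * X \<le> 2 ^ CARD('m)"
    by (simp add: mult_right_mono)
  moreover have "walsh (spread_sum E I) u \<le> 2 * int (card I)"
    and "walsh (spread_sum E J) v \<le> 2 * int (card J)"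
    and "2 * int (card K) - 2 * X \<le> walsh (spread_sum E K) w"
    using walsh_spread_sum_bounds[OF ps m] I J K assms(7-9) by (simp_all add: X_def)
  moreover have "2 * int (card (I \<inter> J)) < X"
  proof -
    have "int (2 * card (I \<inter> J)) < int (2 ^ t)"
      using small by (simp only: of_nat_less_iff)
    then show ?thesis
      by (simp add: X_def)
  qed
  ultimately show ?thesis
    using arg_cong[OF card_K, of int] unfolding spread_sum_add[OF fin] K_def[symmetric] by linarith
qed

lemma card_Int_among_symdiff_triple:
  assumes "finite A" and "finite B" and "card A = s" and "card B = s" and "card (A \<inter> B) = 1"
    and "2 \<le> s"
    and "I \<in> {A, B, (A - B) \<union> (B - A)}" and "J \<in> {A, B, (A - B) \<union> (B - A)}" and "I \<noteq> J"
  shows "card (I \<inter> J) \<le> s - 1"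
proof -
  have "card (A - B) = s - 1" and "card (B - A) = s - 1"
    using assms(1-5) card_Diff_subset_Int[of A B] card_Diff_subset_Int[of B A]
    by (simp_all add: Int_commute)
  moreover have "A \<inter> ((A - B) \<union> (B - A)) = A - B" and "((A - B) \<union> (B - A)) \<inter> A = A - B"
    and "B \<inter> ((A - B) \<union> (B - A)) = B - A" and "((A - B) \<union> (B - A)) \<inter> B = B - A"
    and "B \<inter> A = A \<inter> B"
    by auto
  ultimately show ?thesis
    using assms(5,6,7,8,9) by (elim insertE emptyE) simp_all
qed

theorem lemma7:
  fixes m t s \<alpha> :: nat
    and E :: "nat \<Rightarrow> (bit ^ 'm) set"
    and A B :: "nat set"
    and f g :: "bit ^ 'm \<Rightarrow> bit"
    and F :: "(bit ^ 'm \<Rightarrow> bit) set"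
  assumes "CARD('m) = m" and "m \<ge> 6" and "even m" and "t = m div 2"
    and "2 \<le> s" and "s \<le> 2 ^ (t - 1)"
    and "partial_spread t \<alpha> E"
    and "A \<subseteq> {1..\<alpha>}" and "B \<subseteq> {1..\<alpha>}"
    and "card A = s" and "card B = s" and "card (A \<inter> B) = 1"
    and "f = (\<lambda>x. \<Sum>i\<in>A. spread_fun (E i) x)"
    and "g = (\<lambda>x. \<Sum>i\<in>B. spread_fun (E i) x)"
    and "F = {f, g, \<lambda>x. f x + g x}"
  shows "\<forall>h l f1 f2. h \<noteq> 0 \<and> l \<noteq> 0 \<and> h \<noteq> l \<and> f1 \<in> F \<and> f2 \<in> F \<and> f1 \<noteq> f2 \<longrightarrow>
           walsh f1 (h + l) + walsh f2 h - walsh (\<lambda>x. f1 x + f2 x) l \<noteq> 2 ^ m \<and>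
           walsh f1 (h + l) + walsh f2 l - walsh (\<lambda>x. f1 x + f2 x) h \<noteq> 2 ^ m"
proof (intro allI impI)
  fix h l :: "bit ^ 'm" and f1 f2
  assume hl: "h \<noteq> 0 \<and> l \<noteq> 0 \<and> h \<noteq> l \<and> f1 \<in> F \<and> f2 \<in> F \<and> f1 \<noteq> f2"
  define C where "C = (A - B) \<union> (B - A)"
  have fin: "finite A" "finite B"
    using assms(8,9) finite_subset by blast+
  have m: "CARD('m) = 2 * t" and t: "2 \<le> t"
    using assms(1-4) by auto
  have "F = spread_sum E ` {A, B, C}"
    using assms(13-15) spread_sum_add[OF fin, of E]
    by (simp add: C_def spread_sum_def[abs_def])
  then obtain I J where IJ: "I \<in> {A, B, C}" "J \<in> {A, B, C}" "I \<noteq> J"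
    and f12: "f1 = spread_sum E I" "f2 = spread_sum E J"
    using hl by blast
  have small: "2 * card (I \<inter> J) < 2 ^ t"
  proof -
    have "card (I \<inter> J) \<le> s - 1"
      using card_Int_among_symdiff_triple[OF fin assms(10-12,5)] IJ by (simp add: C_def)
    moreover have "2 * 2 ^ (t - 1) = (2 :: nat) ^ t"
      using t by (cases t) simp_all
    ultimately show ?thesis
      using assms(5,6) by linarith
  qed
  have "I \<subseteq> {1..\<alpha>}" "J \<subseteq> {1..\<alpha>}"
    using IJ assms(8,9) by (auto simp: C_def)
  then have less: "walsh f1 u + walsh f2 v - walsh (\<lambda>x. f1 x + f2 x) w < 2 ^ m"
    if "u \<noteq> 0" "v \<noteq> 0" "w \<noteq> 0" for u v w
    unfolding f12 assms(1)[symmetric]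
    using walsh_spread_sum_combination_less[OF assms(7) m t _ _ small that] by blast
  have "h + l \<noteq> 0"
    using hl vec_bit_add_eq_0_iff by blast
  then show "walsh f1 (h + l) + walsh f2 h - walsh (\<lambda>x. f1 x + f2 x) l \<noteq> 2 ^ m \<and>
      walsh f1 (h + l) + walsh f2 l - walsh (\<lambda>x. f1 x + f2 x) h \<noteq> 2 ^ m"
    using hl by (intro conjI less_imp_neq less) auto
qed

end
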